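(* Let $\mathbf W$, $\mathbf L_{rw}$ be as in the context, let $\mu>0$, and let $\mathbf H\in\{0,1\}^{K\times N}$ with $1\le K<N$ be a sampling matrix (each row has exactly one entry $1$, in distinct columns). Then $\mathbf H^\top\mathbf H+\mu\,\mathbf L_{rw}^\top\mathbf L_{rw}$ is positive definite; consequently, for every $\mathbf y\in\mathbb R^K$ the problem $\min_{\mathbf x\in\mathbb R^N}\|\mathbf H\mathbf x-\mathbf y\|_2^2+\mu\,\mathbf x^\top\mathbf L_{rw}^\top\mathbf L_{rw}\mathbf x$ has the unique minimizer $\mathbf x^*=(\mathbf H^\top\mathbf H+\mu\mathbf L_{rw}^\top\mathbf L_{rw})^{-1}\mathbf H^\top\mathbf y$.
   Context: A directed graph on $N$ nodes is given by an adjacency matrix $\mathbf W\in\mathbb R^{N\times N}$ with $W_{i,j}\ge 0$ ($W_{i,j}>0$ iff there is a directed edge $(i,j)$) and $W_{i,i}=0$ for all $i$. The out-degree matrix is the diagonal matrix $\mathbf D$ with $D_{i,i}=\sum_j W_{i,j}$; it is assumed that $D_{i,i}>0$ for all $i$. The normalized adjacency matrix is $\bar{\mathbf W}=\mathbf D^{-1}\mathbf W$ and the random-walk Laplacian is $\mathbf L_{rw}=\mathbf I-\bar{\mathbf W}$. It is assumed that there exists a node $v$ such that from every other node there is a directed path to $v$. *)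

theory Defs
  imports "HOL-Analysis.Analysis"
begin

definition edges :: "real^'n^'n \<Rightarrow> ('n \<times> 'n) set" where
  "edges W = {(i, j). W $ i $ j > 0}"

definition out_degree :: "real^'n^'n \<Rightarrow> 'n \<Rightarrow> real" where
  "out_degree W i = (\<Sum>j\<in>UNIV. W $ i $ j)"

definition norm_adj :: "real^'n^'n \<Rightarrow> real^'n^'n" where
  "norm_adj W = (\<chi> i j. W $ i $ j / out_degree W i)"

definition L_rw :: "real^'n^'n \<Rightarrow> real^'n^'n" where
  "L_rw W = mat 1 - norm_adj W"

definition sampling_matrix :: "real^'n^'k \<Rightarrow> bool" where
  "sampling_matrix H \<longleftrightarrow>
     (\<forall>i j. H $ i $ j = 0 \<or> H $ i $ j = 1) \<and>
     (\<forall>i. \<exists>!j. H $ i $ j = 1) \<and>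
     (\<forall>i i' j. H $ i $ j = 1 \<and> H $ i' $ j = 1 \<longrightarrow> i = i')"

definition pos_definite :: "real^'n^'n \<Rightarrow> bool" where
  "pos_definite A \<longleftrightarrow> transpose A = A \<and> (\<forall>x. x \<noteq> 0 \<longrightarrow> x \<bullet> (A *v x) > 0)"

end

theory Submission
  imports Defs
begin

text \<open>
  If \<open>L\<^sub>r\<^sub>w x = 0\<close> then every \<open>x\<^sub>i\<close> is the weighted average of its out-neighbours' values, so a
  maximal value propagates along edges and reaches the node \<open>v\<close> reachable from everywhere;
  applied to \<open>x\<close> and \<open>-x\<close> this forces \<open>x\<close> to be constant. A single sample then pins the
  constant to \<open>0\<close>, so \<open>M = H\<^sup>T H + \<mu> L\<^sub>r\<^sub>w\<^sup>T L\<^sub>r\<^sub>w\<close>, whose quadratic form is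
  \<open>\<parallel>H x\<parallel>\<^sup>2 + \<mu> \<parallel>L\<^sub>r\<^sub>w x\<parallel>\<^sup>2\<close>, is positive definite. The objective differs from
  \<open>(x - x\<^sup>*)\<^sup>T M (x - x\<^sup>*)\<close> by a constant, whence the unique minimiser.
\<close>

lemma inner_matrix_vector_transpose:
  "(x::real^'m) \<bullet> (A *v y) = (transpose A *v x) \<bullet> (y::real^'n)"
  by (metis dot_lmul_matrix transpose_matrix_vector)

lemma inner_transpose_mult_self:
  "(x::real^'n) \<bullet> ((transpose A ** A) *v x) = (norm (A *v x))\<^sup>2"
  by (metis inner_matrix_vector_transpose matrix_vector_mul_assoc transpose_transpose
      power2_norm_eq_inner)

lemma transpose_add: "transpose (A + B) = transpose A + transpose (B::real^'n^'m)"
  by (simp add: transpose_def vec_eq_iff)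

lemma L_rw_kernel_weighted_deviation:
  fixes W :: "real^'n^'n" and x :: "real^'n"
  assumes deg_pos: "out_degree W a > 0"
    and kernel: "L_rw W *v x = 0"
  shows "(\<Sum>j\<in>UNIV. W $ a $ j * (x $ a - x $ j)) = 0"
proof -
  have "(\<Sum>j\<in>UNIV. ((if a = j then 1 else 0) - W $ a $ j / out_degree W a) * x $ j) = 0"
    using kernel by (simp add: vec_eq_iff L_rw_def norm_adj_def matrix_vector_mult_def mat_def)
  hence "x $ a - (\<Sum>j\<in>UNIV. W $ a $ j / out_degree W a * x $ j) = 0"
    by (simp add: left_diff_distrib sum_subtractf if_distrib[where f="\<lambda>t. t * _"] cong: if_cong)
  hence "x $ a * out_degree W a = (\<Sum>j\<in>UNIV. W $ a $ j * x $ j)"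
    using deg_pos by (simp add: sum_divide_distrib[symmetric] field_simps)
  thus ?thesis
    by (simp add: out_degree_def sum_distrib_left sum_subtractf algebra_simps)
qed

lemma L_rw_kernel_max_along_edge:
  fixes W :: "real^'n^'n" and x :: "real^'n"
  assumes nonneg: "\<forall>i j. W $ i $ j \<ge> 0"
    and deg_pos: "out_degree W a > 0"
    and kernel: "L_rw W *v x = 0"
    and max: "\<forall>j. x $ j \<le> x $ a"
    and edge: "(a, b) \<in> edges W"
  shows "x $ b = x $ a"
proof -
  have "\<forall>j\<in>UNIV. 0 \<le> W $ a $ j * (x $ a - x $ j)"
    using nonneg max by simp
  hence "W $ a $ b * (x $ a - x $ b) = 0"
    using L_rw_kernel_weighted_deviation[OF deg_pos kernel]
      sum_nonneg_eq_0_iff[of UNIV "\<lambda>j. W $ a $ j * (x $ a - x $ j)"] by simp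
  moreover have "W $ a $ b > 0"
    using edge by (simp add: edges_def)
  ultimately show ?thesis by simp
qed

lemma L_rw_kernel_max_along_path:
  fixes W :: "real^'n^'n" and x :: "real^'n"
  assumes nonneg: "\<forall>i j. W $ i $ j \<ge> 0"
    and deg_pos: "\<forall>i. out_degree W i > 0"
    and kernel: "L_rw W *v x = 0"
    and path: "(a, b) \<in> (edges W)\<^sup>+"
    and max: "\<forall>j. x $ j \<le> x $ a"
  shows "x $ b = x $ a"
  using path
proof (induction rule: trancl_induct)
  case (base c)
  then show ?case
    using L_rw_kernel_max_along_edge[OF nonneg deg_pos[rule_format] kernel max] by blast
next
  case (step c d)
  then have "\<forall>j. x $ j \<le> x $ c"
    using max by simp
  with step have "x $ d = x $ c"
    using L_rw_kernel_max_along_edge[OF nonneg deg_pos[rule_format] kernel] by blast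
  with step show ?case
    by simp
qed

lemma L_rw_kernel_le_sink:
  fixes W :: "real^'n^'n" and x :: "real^'n"
  assumes nonneg: "\<forall>i j. W $ i $ j \<ge> 0"
    and deg_pos: "\<forall>i. out_degree W i > 0"
    and kernel: "L_rw W *v x = 0"
    and reach: "\<forall>i. i \<noteq> v \<longrightarrow> (i, v) \<in> (edges W)\<^sup>+"
  shows "x $ j \<le> x $ v"
proof -
  have "Max (range (\<lambda>j. x $ j)) \<in> range (\<lambda>j. x $ j)"
    by (rule Max_in) auto
  then obtain a where a: "x $ a = Max (range (\<lambda>j. x $ j))"
    by (metis imageE)
  have max: "\<forall>j. x $ j \<le> x $ a"
    unfolding a by simp
  have "x $ v = x $ a"
    using L_rw_kernel_max_along_path[OF nonneg deg_pos kernel _ max] reach by (cases "a = v") auto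
  with max show ?thesis by simp
qed

lemma L_rw_kernel_constant:
  fixes W :: "real^'n^'n" and x :: "real^'n"
  assumes nonneg: "\<forall>i j. W $ i $ j \<ge> 0"
    and deg_pos: "\<forall>i. out_degree W i > 0"
    and kernel: "L_rw W *v x = 0"
    and reach: "\<forall>i. i \<noteq> v \<longrightarrow> (i, v) \<in> (edges W)\<^sup>+"
  shows "x $ j = x $ v"
proof -
  have "L_rw W *v (- x) = 0"
    using kernel matrix_vector_mult_diff_distrib[of "L_rw W" 0 x] by simp
  then have "(- x) $ j \<le> (- x) $ v"
    by (rule L_rw_kernel_le_sink[OF nonneg deg_pos _ reach])
  moreover have "x $ j \<le> x $ v"
    by (rule L_rw_kernel_le_sink[OF nonneg deg_pos kernel reach])
  ultimately show ?thesis by simp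
qed

lemma sampling_matrix_samples_entry:
  assumes "sampling_matrix H"
  obtains j where "\<And>x. (H *v x) $ k = x $ j"
proof -
  obtain j where "H $ k $ j = 1"
    using assms unfolding sampling_matrix_def by blast
  with assms have row: "H $ k $ i = (if i = j then 1 else 0)" for i
    unfolding sampling_matrix_def by metis
  show thesis
    by (rule that) (simp add: matrix_vector_mult_def row if_distrib[where f="\<lambda>t. t * _"] cong: if_cong)
qed

lemma sampled_L_rw_kernel_trivial:
  fixes W :: "real^'n^'n" and H :: "real^'n^'k" and x :: "real^'n"
  assumes nonneg: "\<forall>i j. W $ i $ j \<ge> 0"
    and deg_pos: "\<forall>i. out_degree W i > 0"
    and reach: "\<forall>i. i \<noteq> v \<longrightarrow> (i, v) \<in> (edges W)\<^sup>+"
    and samp: "sampling_matrix H"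
    and "H *v x = 0" and "L_rw W *v x = 0"
  shows "x = 0"
proof -
  \<comment> \<open>any row will do; \<open>undefined\<close> is just some element of the nonempty type \<open>'k\<close>\<close>
  obtain j where sample: "(H *v x) $ (undefined :: 'k) = x $ j"
    using sampling_matrix_samples_entry[OF samp] by blast
  have "x $ i = x $ j" for i
    using L_rw_kernel_constant[OF nonneg deg_pos \<open>L_rw W *v x = 0\<close> reach] by metis
  moreover have "x $ j = 0"
    using sample \<open>H *v x = 0\<close> by simp
  ultimately show ?thesis
    by (simp add: vec_eq_iff)
qed

lemma pos_definite_gram_sum:
  fixes A :: "real^'n^'m" and B :: "real^'n^'p"
  assumes mu_pos: "\<mu> > 0"
    and ker: "\<And>x. A *v x = 0 \<Longrightarrow> B *v x = 0 \<Longrightarrow> x = 0"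
  shows "pos_definite (transpose A ** A + \<mu> *\<^sub>R (transpose B ** B))"
    (is "pos_definite ?M")
proof -
  have form: "x \<bullet> (?M *v x) = (norm (A *v x))\<^sup>2 + \<mu> * (norm (B *v x))\<^sup>2" for x
  proof -
    have "?M *v x = (transpose A ** A) *v x + \<mu> *\<^sub>R ((transpose B ** B) *v x)"
      by (simp add: matrix_vector_mult_add_rdistrib scaleR_matrix_vector_assoc)
    thus ?thesis
      by (simp add: inner_add_right inner_transpose_mult_self)
  qed
  have "x \<bullet> (?M *v x) > 0" if "x \<noteq> 0" for x
  proof -
    have "A *v x \<noteq> 0 \<or> B *v x \<noteq> 0"
      using ker that by blast
    with mu_pos show ?thesis
      unfolding form by (auto intro: add_pos_nonneg add_nonneg_pos)
  qed
  moreover have "transpose ?M = ?M"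
    by (simp add: transpose_add transpose_scalar matrix_transpose_mul)
  ultimately show ?thesis
    unfolding pos_definite_def by blast
qed

lemma pos_definite_mult_matrix_inv:
  assumes "pos_definite M"
  shows "M ** matrix_inv M = mat 1"
proof -
  have "M *v x = 0 \<Longrightarrow> x = 0" for x
    using assms unfolding pos_definite_def by force
  hence "invertible M"
    using matrix_left_invertible_ker invertible_left_inverse by blast
  thus ?thesis
    unfolding invertible_def matrix_inv_def
    using someI_ex[of "\<lambda>A'. M ** A' = mat 1 \<and> A' ** M = mat 1"] by blast
qed

text \<open>Completing the square: the form equals \<open>(x - x\<^sup>*)\<^sup>T M (x - x\<^sup>*) - x\<^sup>*\<^sup>T b\<close>.\<close>

lemma pos_definite_quadratic_argmin:
  fixes M :: "real^'n^'n" and b :: "real^'n"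
  assumes pd: "pos_definite M"
  defines "Q \<equiv> \<lambda>x. x \<bullet> (M *v x) - 2 * (x \<bullet> b)"
  shows "{x. \<forall>z. Q x \<le> Q z} = {matrix_inv M *v b}"
proof -
  define xs where "xs = matrix_inv M *v b"
  have Mxs: "M *v xs = b"
    unfolding xs_def by (simp add: matrix_vector_mul_assoc pos_definite_mult_matrix_inv[OF pd])
  have sym: "u \<bullet> (M *v w) = w \<bullet> (M *v u)" for u w
    using pd unfolding pos_definite_def by (metis inner_matrix_vector_transpose inner_commute)
  have square: "Q x = (x - xs) \<bullet> (M *v (x - xs)) - xs \<bullet> b" for x
    using sym[of xs x] Mxs
    by (simp add: Q_def matrix_vector_mult_diff_distrib inner_diff_left inner_diff_right)
  have pos: "x \<noteq> xs \<Longrightarrow> (x - xs) \<bullet> (M *v (x - xs)) > 0" for x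
    using pd unfolding pos_definite_def by simp
  have "Q xs \<le> Q z" for z
    using pos[of z] square[of z] square[of xs] by (cases "z = xs") auto
  moreover have "x = xs" if "\<forall>z. Q x \<le> Q z" for x
  proof (rule ccontr)
    assume "x \<noteq> xs"
    with pos[of x] square[of x] square[of xs] have "Q xs < Q x"
      by simp
    with that show False
      by (meson not_le)
  qed
  ultimately show ?thesis
    unfolding xs_def by blast
qed

lemma regularized_least_squares_argmin:
  fixes A :: "real^'n^'m" and B :: "real^'n^'n" and y :: "real^'m" and \<mu> :: real
  defines "M \<equiv> transpose A ** A + \<mu> *\<^sub>R B"
  assumes pd: "pos_definite M"
  shows "{x. \<forall>z. (norm (A *v x - y))\<^sup>2 + \<mu> * (x \<bullet> (B *v x))
               \<le> (norm (A *v z - y))\<^sup>2 + \<mu> * (z \<bullet> (B *v z))}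
         = {matrix_inv M *v (transpose A *v y)}"
proof -
  define b where "b = transpose A *v y"
  have "(norm (A *v x - y))\<^sup>2 + \<mu> * (x \<bullet> (B *v x))
        = (x \<bullet> (M *v x) - 2 * (x \<bullet> b)) + (norm y)\<^sup>2" for x
  proof -
    have "(A *v x) \<bullet> y = x \<bullet> b"
      unfolding b_def by (metis inner_matrix_vector_transpose inner_commute)
    moreover have "M *v x = (transpose A ** A) *v x + \<mu> *\<^sub>R (B *v x)"
      by (simp add: M_def matrix_vector_mult_add_rdistrib scaleR_matrix_vector_assoc)
    ultimately show ?thesis
      by (simp add: power2_norm_eq_inner inner_diff_left inner_diff_right inner_commute
          inner_add_right inner_transpose_mult_self)
  qed
  thus ?thesis
    using pos_definite_quadratic_argmin[OF pd, of b] by (simp add: b_def)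
qed

theorem mainTheorem3:
  fixes W :: "real^'n^'n" and H :: "real^'n^'k" and \<mu> :: real
  assumes nonneg: "\<forall>i j. W $ i $ j \<ge> 0"
    and zero_diag: "\<forall>i. W $ i $ i = 0"
    and deg_pos: "\<forall>i. out_degree W i > 0"
    and reach: "\<exists>v. \<forall>i. i \<noteq> v \<longrightarrow> (i, v) \<in> (edges W)\<^sup>+"
    and mu_pos: "\<mu> > 0"
    and samp: "sampling_matrix H"
    and K_lt_N: "CARD('k) < CARD('n)"
  shows "pos_definite (transpose H ** H + \<mu> *\<^sub>R (transpose (L_rw W) ** L_rw W)) \<and>
    (\<forall>y :: real^'k.
       let M = transpose H ** H + \<mu> *\<^sub>R (transpose (L_rw W) ** L_rw W);
           J = (\<lambda>x :: real^'n. (norm (H *v x - y))\<^sup>2 + \<mu> * (x \<bullet> ((transpose (L_rw W) ** L_rw W) *v x)))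
       in {x. \<forall>z. J x \<le> J z} = {matrix_inv M *v (transpose H *v y)})"
proof -
  obtain v where v: "\<forall>i. i \<noteq> v \<longrightarrow> (i, v) \<in> (edges W)\<^sup>+"
    using reach by blast
  have pd: "pos_definite (transpose H ** H + \<mu> *\<^sub>R (transpose (L_rw W) ** L_rw W))"
    using pos_definite_gram_sum[OF mu_pos] sampled_L_rw_kernel_trivial[OF nonneg deg_pos v samp]
    by blast
  show ?thesis
    unfolding Let_def using pd regularized_least_squares_argmin[OF pd] by blast
qed

end
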